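(* Consider binary-tree pivotal sampling on a fixed full binary tree $T$ under the standing assumptions. Let $v$ be a non-root internal node and $b\in\{0,1\}$ with $\Pr[\xi_v=b]>0$. Let $\boldsymbol\xi_I$ be the vector of statuses $\xi_u$ of all nodes $u\ne v$ in the subtree rooted at $v$, and $\boldsymbol\xi_O$ the vector of statuses of all non-root nodes outside this subtree. Then, conditionally on $\xi_v=b$, $\boldsymbol\xi_I$ and $\boldsymbol\xi_O$ are independent: for all binary vectors $\mathbf x_I,\mathbf x_O$ of matching lengths, $$\Pr[\boldsymbol\xi_I=\mathbf x_I,\boldsymbol\xi_O=\mathbf x_O\mid\xi_v=b]=\Pr[\boldsymbol\xi_I=\mathbf x_I\mid\xi_v=b]\,\Pr[\boldsymbol\xi_O=\mathbf x_O\mid\xi_v=b].$$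
   Context: Binary-tree pivotal sampling: let $T$ be a full binary tree whose leaves are identified with an index set, and let $q_i\in[0,1]$ be leaf probabilities with integer sum. Each node can store an index together with a current probability; initially each leaf $i$ stores $i$ with probability $q_i$, and the output set $\mathcal S_{\rm out}$ is empty. Repeatedly choose two sibling nodes that both store indices, say $i$ with probability $q_i$ and $j$ with probability $q_j$, with parent $P$, and remove them. If $q_i+q_j\le1$: with probability $q_i/(q_i+q_j)$ store $i$ at $P$ with probability $q_i+q_j$ ($j$ is rejected), otherwise store $j$ at $P$ with probability $q_i+q_j$ ($i$ is rejected). If $q_i+q_j>1$: with probability $(1-q_i)/(2-q_i-q_j)$ put $j$ into $\mathcal S_{\rm out}$ and store $i$ at $P$ with probability $q_i+q_j-1$; otherwise put $i$ into $\mathcal S_{\rm out}$ and store $j$ at $P$ with probability $q_i+q_j-1$. When only the root stores an index, put it into $\mathcal S_{\rm out}$ iff its probability is $1$. Carried probabilities: $\pi_v=q_i$ for a leaf $v$ with index $i$; for an internal node $v$ with children $v_1,v_2$, $\pi_v=\pi_{v_1}+\pi_{v_2}$ if $\pi_{v_1}+\pi_{v_2}<1$ and $\pi_v=\pi_{v_1}+\pi_{v_2}-1$ if $\pi_{v_1}+\pi_{v_2}>1$. Node statuses: for a non-root node $v$, $\xi_v\in\{0,1\}$ is the indicator that the index stored at $v$ (for a leaf, its own index; for an internal node, the index promoted to $v$ by the comparison of its children) belongs to the final output $\mathcal S_{\rm out}$. Standing assumptions: all leaf probabilities lie in $(0,1)$; for every internal non-root node $v$ with children $v_1,v_2$, $\pi_{v_1}+\pi_{v_2}\ne1$;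 for the two children $r_1,r_2$ of the root, $\pi_{r_1}+\pi_{r_2}=1$. *)

theory Defs
  imports "HOL-Probability.Probability"
begin

text \<open>Full binary trees whose leaves carry indices (natural numbers).
  Nodes are addressed by paths from the root: [] is the root,
  False # p goes to the left child, True # p to the right child.\<close>

datatype tree = Leaf nat | Node tree tree

fun leaves :: "tree \<Rightarrow> nat list" where
  "leaves (Leaf i) = [i]"
| "leaves (Node l r) = leaves l @ leaves r"

fun subtree_at :: "tree \<Rightarrow> bool list \<Rightarrow> tree option" where
  "subtree_at t [] = Some t"
| "subtree_at (Leaf i) (c # p) = None"
| "subtree_at (Node l r) (c # p) = subtree_at (if c then r else l) p"

definition nodes :: "tree \<Rightarrow> bool list set" where
  "nodes t = {p. subtree_at t p \<noteq> None}"

definition internal_nodes :: "tree \<Rightarrow> bool list set" where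
  "internal_nodes t = {p. \<exists>l r. subtree_at t p = Some (Node l r)}"

text \<open>Carried probabilities \<pi>_v.  At a sum equal to 1 (only possible at the root,
  by the standing assumptions) the value is the sum, as in the algorithm.\<close>

fun carried :: "(nat \<Rightarrow> real) \<Rightarrow> tree \<Rightarrow> real" where
  "carried q (Leaf i) = q i"
| "carried q (Node l r) =
     (let s = carried q l + carried q r in if s \<le> 1 then s else s - 1)"

text \<open>State of a processed subtree: (index stored at its root, its current probability,
  output set produced inside the subtree, map from node paths (relative to the subtree
  root) to the index stored at that node).\<close>

type_synonym pstate = "nat \<times> real \<times> nat set \<times> (bool list \<Rightarrow> nat option)"

definition node_st ::
  "nat \<Rightarrow> (bool list \<Rightarrow> nat option) \<Rightarrow> (bool list \<Rightarrow> nat option) \<Rightarrow> bool list \<Rightarrow> nat option" where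
  "node_st k stL stR p =
     (case p of [] \<Rightarrow> Some k | c # p' \<Rightarrow> (if c then stR p' else stL p'))"

definition pivot_step :: "pstate \<Rightarrow> pstate \<Rightarrow> pstate pmf" where
  "pivot_step a b =
     (case a of (i, qi, Sl, stL) \<Rightarrow> case b of (j, qj, Sr, stR) \<Rightarrow>
       if qi + qj \<le> 1 then
         map_pmf (\<lambda>c. if c then (i, qi + qj, Sl \<union> Sr, node_st i stL stR)
                         else (j, qi + qj, Sl \<union> Sr, node_st j stL stR))
                 (bernoulli_pmf (qi / (qi + qj)))
       else
         map_pmf (\<lambda>c. if c then (i, qi + qj - 1, Sl \<union> Sr \<union> {j}, node_st i stL stR)
                         else (j, qi + qj - 1, Sl \<union> Sr \<union> {i}, node_st j stL stR))
                 (bernoulli_pmf ((1 - qi) / (2 - qi - qj))))"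

text \<open>Bottom-up pivotal sampling on a subtree (the random choices at different
  comparisons are independent, so the order of the comparisons is irrelevant).\<close>

fun pivotal :: "(nat \<Rightarrow> real) \<Rightarrow> tree \<Rightarrow> pstate pmf" where
  "pivotal q (Leaf i) = return_pmf (i, q i, {}, \<lambda>p. if p = [] then Some i else None)"
| "pivotal q (Node l r) =
     bind_pmf (pivotal q l) (\<lambda>a. bind_pmf (pivotal q r) (\<lambda>b. pivot_step a b))"

definition S_out :: "pstate \<Rightarrow> nat set" where
  "S_out \<omega> = (case \<omega> of (i, p, S, st) \<Rightarrow> S \<union> (if p = 1 then {i} else {}))"

definition status :: "pstate \<Rightarrow> bool list \<Rightarrow> bool" where
  "status \<omega> u = (case \<omega> of (i, p, S, st) \<Rightarrow> the (st u) \<in> S_out \<omega>)"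

definition standing_assumptions :: "(nat \<Rightarrow> real) \<Rightarrow> tree \<Rightarrow> bool" where
  "standing_assumptions q T \<longleftrightarrow>
     distinct (leaves T) \<and>
     (\<forall>i \<in> set (leaves T). 0 < q i \<and> q i < 1) \<and>
     (\<Sum>i \<in> set (leaves T). q i) \<in> \<int> \<and>
     (\<forall>p l r. p \<noteq> [] \<longrightarrow> subtree_at T p = Some (Node l r) \<longrightarrow> carried q l + carried q r \<noteq> 1) \<and>
     (\<exists>l r. T = Node l r \<and> carried q l + carried q r = 1)"

definition inside_nodes :: "tree \<Rightarrow> bool list \<Rightarrow> bool list set" where
  "inside_nodes T v = {u \<in> nodes T. (\<exists>w. u = v @ w) \<and> u \<noteq> v}"

definition outside_nodes :: "tree \<Rightarrow> bool list \<Rightarrow> bool list set" where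
  "outside_nodes T v = {u \<in> nodes T. u \<noteq> [] \<and> \<not> (\<exists>w. u = v @ w)}"

end

theory Submission
  imports Defs "HOL-Combinatorics.Transposition"
begin

text \<open>
  Let t be the subtree at v.  The coin biases are functions of the carried probabilities
  alone, so a run on T splits into the run on t, with outcome x, and an independent draw ks
  of the runs on the sibling subtrees along the path from v to the root together with the
  coins tossed on that path; the final state is plug T v x ks.  Indices from t and from ks can
  only meet in the index i that x promotes to v.  Hence the statuses at v and outside t are
  statuses of the run with t replaced by a leaf carrying i, and relabelling i to a fixed leaf
  of t shows that they depend on ks alone; the statuses inside t are determined by x and the
  status of v.  Conditioning on the status of v then factors the product measure.
\<close>

definition pivot_bias :: "real \<Rightarrow> real \<Rightarrow> real" where
  "pivot_bias qi qj = (if qi + qj \<le> 1 then qi / (qi + qj) else (1 - qi) / (2 - qi - qj))"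

definition pivot_result :: "pstate \<Rightarrow> pstate \<Rightarrow> bool \<Rightarrow> pstate" where
  "pivot_result a b c =
     (case a of (i, qi, Sl, stL) \<Rightarrow> case b of (j, qj, Sr, stR) \<Rightarrow>
       if qi + qj \<le> 1 then
         (if c then (i, qi + qj, Sl \<union> Sr, node_st i stL stR)
          else (j, qi + qj, Sl \<union> Sr, node_st j stL stR))
       else
         (if c then (i, qi + qj - 1, Sl \<union> Sr \<union> {j}, node_st i stL stR)
          else (j, qi + qj - 1, Sl \<union> Sr \<union> {i}, node_st j stL stR)))"

lemma pivot_step_eq_map_bernoulli:
  "pivot_step a b = map_pmf (pivot_result a b) (bernoulli_pmf (pivot_bias (fst (snd a)) (fst (snd b))))"
  by (cases a; cases b) (auto simp: pivot_step_def pivot_result_def pivot_bias_def intro: map_pmf_cong)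

lemma set_pmf_pivotal_NodeE:
  assumes "\<omega> \<in> set_pmf (pivotal q (Node l r))"
  obtains a b c where "a \<in> set_pmf (pivotal q l)" "b \<in> set_pmf (pivotal q r)" "\<omega> = pivot_result a b c"
  using assms by (auto simp: pivot_step_eq_map_bernoulli)

lemma carried_pivotal: "\<omega> \<in> set_pmf (pivotal q t) \<Longrightarrow> fst (snd \<omega>) = carried q t"
proof (induction t arbitrary: \<omega>)
  case (Leaf i)
  then show ?case by simp
next
  case (Node l r)
  from Node.prems obtain a b c
    where "a \<in> set_pmf (pivotal q l)" "b \<in> set_pmf (pivotal q r)" "\<omega> = pivot_result a b c"
    by (rule set_pmf_pivotal_NodeE)
  with Node.IH show ?case
    by (cases a; cases b) (auto simp: pivot_result_def Let_def)
qed

definition labels :: "pstate \<Rightarrow> nat set" where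
  "labels \<omega> = (case \<omega> of (i, p, S, st) \<Rightarrow> insert i (S \<union> {j. \<exists>w. st w = Some j}))"

lemma node_st_SomeD:
  "node_st k stL stR w = Some j \<Longrightarrow> j = k \<or> (\<exists>w. stL w = Some j) \<or> (\<exists>w. stR w = Some j)"
  by (cases w) (auto simp: node_st_def split: if_splits)

lemma labels_pivot_result: "labels (pivot_result a b c) \<subseteq> labels a \<union> labels b"
  by (cases a; cases b) (auto simp: pivot_result_def labels_def dest!: node_st_SomeD)

lemma labels_pivotal: "\<omega> \<in> set_pmf (pivotal q t) \<Longrightarrow> labels \<omega> \<subseteq> set (leaves t)"
proof (induction t arbitrary: \<omega>)
  case (Leaf i)
  then show ?case by (auto simp: labels_def)
next
  case (Node l r)
  from Node.prems obtain a b c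
    where "a \<in> set_pmf (pivotal q l)" "b \<in> set_pmf (pivotal q r)" "\<omega> = pivot_result a b c"
    by (rule set_pmf_pivotal_NodeE)
  with Node.IH labels_pivot_result[of a b c] show ?case by fastforce
qed

definition well_formed :: "tree \<Rightarrow> pstate \<Rightarrow> bool" where
  "well_formed t \<omega> \<longleftrightarrow>
     (case \<omega> of (i, p, S, st) \<Rightarrow> i \<notin> S \<and> st [] = Some i \<and> (\<forall>w \<in> nodes t. st w \<noteq> None))"

lemma nodes_Node: "c # w \<in> nodes (Node l r) \<longleftrightarrow> w \<in> nodes (if c then r else l)"
  by (simp add: nodes_def)

lemma nodes_Leaf: "w \<in> nodes (Leaf i) \<longleftrightarrow> w = []"
  by (cases w) (auto simp: nodes_def)

lemma well_formed_pivotal: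
  "distinct (leaves t) \<Longrightarrow> \<omega> \<in> set_pmf (pivotal q t) \<Longrightarrow> well_formed t \<omega>"
proof (induction t arbitrary: \<omega>)
  case (Leaf i)
  then show ?case by (auto simp: well_formed_def nodes_Leaf)
next
  case (Node l r)
  from Node.prems(2) obtain a b c
    where a: "a \<in> set_pmf (pivotal q l)" and b: "b \<in> set_pmf (pivotal q r)"
      and \<omega>: "\<omega> = pivot_result a b c"
    by (rule set_pmf_pivotal_NodeE)
  obtain i pa Sa sta where A: "a = (i, pa, Sa, sta)" by (cases a) auto
  obtain j pb Sb stb where B: "b = (j, pb, Sb, stb)" by (cases b) auto
  have disjoint: "set (leaves l) \<inter> set (leaves r) = {}"
    using Node.prems by simp
  have wf: "well_formed l a" "well_formed r b"
    using Node a b by auto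
  have "labels a \<subseteq> set (leaves l)" "labels b \<subseteq> set (leaves r)"
    using labels_pivotal a b by auto
  moreover have "\<forall>w \<in> nodes (Node l r). node_st k sta stb w \<noteq> None" for k
    using wf A B by (auto simp: nodes_Node well_formed_def node_st_def split: list.split)
  ultimately show ?case
    using wf \<omega> A B disjoint by (auto simp: pivot_result_def well_formed_def labels_def node_st_def)
qed

fun plug :: "tree \<Rightarrow> bool list \<Rightarrow> pstate \<Rightarrow> (pstate \<times> bool) list \<Rightarrow> pstate" where
  "plug (Node l r) (c # v) x ((s, coin) # ks) =
     (if c then pivot_result s (plug r v x ks) coin else pivot_result (plug l v x ks) s coin)"
| "plug _ _ x _ = x"

fun siblings_pmf :: "(nat \<Rightarrow> real) \<Rightarrow> tree \<Rightarrow> bool list \<Rightarrow> (pstate \<times> bool) list pmf" where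
  "siblings_pmf q (Node l r) (c # v) =
     bind_pmf (siblings_pmf q (if c then r else l) v) (\<lambda>ks.
       bind_pmf (pivotal q (if c then l else r)) (\<lambda>s.
         map_pmf (\<lambda>coin. (s, coin) # ks) (bernoulli_pmf (pivot_bias (carried q l) (carried q r)))))"
| "siblings_pmf q _ _ = return_pmf []"

lemma pivotal_Node_towards:
  "pivotal q (Node l r) =
     bind_pmf (pivotal q (if c then r else l)) (\<lambda>y.
       bind_pmf (pivotal q (if c then l else r)) (\<lambda>s.
         map_pmf (\<lambda>coin. if c then pivot_result s y coin else pivot_result y s coin)
           (bernoulli_pmf (pivot_bias (carried q l) (carried q r)))))"
proof -
  have step: "pivot_step a b = map_pmf (pivot_result a b) (bernoulli_pmf (pivot_bias (carried q l) (carried q r)))"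
    if "a \<in> set_pmf (pivotal q l)" "b \<in> set_pmf (pivotal q r)" for a b
    using that by (simp add: pivot_step_eq_map_bernoulli carried_pivotal)
  show ?thesis
  proof (cases c)
    case True
    then show ?thesis
      by (simp add: bind_commute_pmf[of "pivotal q l"] step cong: bind_pmf_cong)
  next
    case False
    then show ?thesis
      by (simp add: step cong: bind_pmf_cong)
  qed
qed

lemma pivotal_plug:
  "subtree_at T v = Some t \<Longrightarrow>
     pivotal q T = bind_pmf (pivotal q t) (\<lambda>x. map_pmf (plug T v x) (siblings_pmf q T v))"
proof (induction v arbitrary: T)
  case Nil
  then show ?case by (simp add: bind_return_pmf')
next
  case (Cons c v)
  then obtain l r where T: "T = Node l r" by (cases T) auto
  with Cons have IH: "pivotal q (if c then r else l) =
      bind_pmf (pivotal q t) (\<lambda>x. map_pmf (plug (if c then r else l) v x) (siblings_pmf q (if c then r else l) v))"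
    by simp
  show ?case
    unfolding T pivotal_Node_towards[of q l r c] IH
    by (cases c) (simp_all add: map_pmf_def bind_assoc_pmf bind_return_pmf)
qed

definition leaf_state :: "nat \<Rightarrow> real \<Rightarrow> pstate" where
  "leaf_state i p = (i, p, {}, \<lambda>w. if w = [] then Some i else None)"

definition overlay :: "bool list \<Rightarrow> pstate \<Rightarrow> pstate \<Rightarrow> pstate" where
  "overlay v x \<omega> =
     (case x of (i, p, Sx, stx) \<Rightarrow> case \<omega> of (i', p', S', st') \<Rightarrow>
       (i', p', Sx \<union> S', \<lambda>u. if \<exists>w. u = v @ w then stx (drop (length v) u) else st' u))"

lemma plug_overlay:
  "subtree_at T v \<noteq> None \<Longrightarrow> length ks = length v \<Longrightarrow>
     plug T v x ks = overlay v x (plug T v (leaf_state (fst x) (fst (snd x))) ks)"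
proof (induction v arbitrary: T ks)
  case Nil
  then show ?case by (cases x) (auto simp: overlay_def leaf_state_def)
next
  case (Cons c v)
  then obtain l r where T: "T = Node l r" by (cases T) auto
  from Cons obtain s coin ks' where ks: "ks = (s, coin) # ks'" by (cases ks) auto
  obtain i p Sx stx where x: "x = (i, p, Sx, stx)" by (cases x) auto
  define y where "y = plug (if c then r else l) v (leaf_state i p) ks'"
  have IH: "plug (if c then r else l) v x ks' = overlay v x y"
    using Cons T ks x by (auto simp: y_def)
  obtain i' p' S' st' where y: "y = (i', p', S', st')" by (cases y) auto
  obtain j pj Sj stj where s: "s = (j, pj, Sj, stj)" by (cases s) auto
  show ?case
    using IH x y s T ks unfolding y_def
    by (cases c) (auto simp: overlay_def pivot_result_def node_st_def fun_eq_iff split: list.splits)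
qed

definition relabel :: "(nat \<Rightarrow> nat) \<Rightarrow> pstate \<Rightarrow> pstate" where
  "relabel f \<omega> = (case \<omega> of (i, p, S, st) \<Rightarrow> (f i, p, f ` S, \<lambda>w. map_option f (st w)))"

lemma relabel_pivot_result: "pivot_result (relabel f a) (relabel f b) c = relabel f (pivot_result a b c)"
  by (cases a; cases b)
    (auto simp: pivot_result_def relabel_def node_st_def fun_eq_iff image_Un split: list.splits)

lemma relabel_id_on_labels: "(\<And>j. j \<in> labels \<omega> \<Longrightarrow> f j = j) \<Longrightarrow> relabel f \<omega> = \<omega>"
proof -
  assume f: "\<And>j. j \<in> labels \<omega> \<Longrightarrow> f j = j"
  obtain i p S st where \<omega>: "\<omega> = (i, p, S, st)" by (cases \<omega>) auto
  have "map_option f (st w) = st w" for w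
    using f \<omega> by (cases "st w") (auto simp: labels_def)
  moreover have "f ` S = S"
    using f \<omega> by (force simp: labels_def image_iff)
  ultimately show ?thesis
    using f \<omega> by (auto simp: relabel_def labels_def fun_eq_iff)
qed

lemma plug_relabel:
  "\<forall>y \<in> set ks. \<forall>j \<in> labels (fst y). f j = j \<Longrightarrow>
     plug T v (relabel f x) ks = relabel f (plug T v x ks)"
proof (induction T v x ks rule: plug.induct)
  case (1 l r c v x s coin ks)
  then have "relabel f s = s"
    by (intro relabel_id_on_labels) simp
  with 1 show ?case
    by (simp add: relabel_pivot_result[symmetric])
qed simp_all

lemma status_relabel:
  assumes "inj f" and "snd (snd (snd \<omega>)) u \<noteq> None"
  shows "status (relabel f \<omega>) u = status \<omega> u"
proof -
  obtain i p S st where \<omega>: "\<omega> = (i, p, S, st)" by (cases \<omega>) auto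
  with assms obtain j where j: "st u = Some j" by auto
  have "S_out (relabel f \<omega>) = f ` S_out \<omega>"
    by (auto simp: \<omega> S_out_def relabel_def)
  then show ?thesis
    using \<omega> j \<open>inj f\<close> by (simp add: status_def relabel_def inj_image_mem_iff)
qed

lemma labels_plug: "labels (plug T v x ks) \<subseteq> labels x \<union> (\<Union>y \<in> set ks. labels (fst y))"
proof (induction T v x ks rule: plug.induct)
  case (1 l r c v x s coin ks)
  then show ?case
    using labels_pivot_result[of s "plug r v x ks" coin] labels_pivot_result[of "plug l v x ks" s coin]
    by auto
qed simp_all

lemma leaves_ne_Nil: "leaves t \<noteq> []"
  by (induction t) auto

lemma set_leaves_subtree_at: "subtree_at T v = Some t \<Longrightarrow> set (leaves t) \<subseteq> set (leaves T)"
proof (induction v arbitrary: T)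
  case (Cons c v)
  then obtain l r where "T = Node l r" by (cases T) auto
  with Cons show ?case by (cases c) auto
qed simp

lemma distinct_leaves_subtree_at:
  "subtree_at T v = Some t \<Longrightarrow> distinct (leaves T) \<Longrightarrow> distinct (leaves t)"
proof (induction v arbitrary: T)
  case (Cons c v)
  then obtain l r where "T = Node l r" by (cases T) auto
  with Cons show ?case by (cases c) auto
qed simp

lemma set_pmf_siblings_pmf:
  assumes "subtree_at T v = Some t" and "distinct (leaves T)" and "ks \<in> set_pmf (siblings_pmf q T v)"
  shows "length ks = length v" and "\<forall>y \<in> set ks. labels (fst y) \<inter> set (leaves t) = {}"
proof -
  have "length ks = length v \<and> (\<forall>y \<in> set ks. labels (fst y) \<inter> set (leaves t) = {})"
    using assms
  proof (induction v arbitrary: T ks)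
    case Nil
    then show ?case by simp
  next
    case (Cons c v)
    then obtain l r where T: "T = Node l r" by (cases T) auto
    from Cons.prems T obtain ks' s coin where ks: "ks = (s, coin) # ks'"
      and ks': "ks' \<in> set_pmf (siblings_pmf q (if c then r else l) v)"
      and s: "s \<in> set_pmf (pivotal q (if c then l else r))"
      by auto
    have t: "subtree_at (if c then r else l) v = Some t"
      using Cons.prems T by simp
    have "set (leaves t) \<subseteq> set (leaves (if c then r else l))"
      using set_leaves_subtree_at[OF t] .
    moreover have "labels s \<subseteq> set (leaves (if c then l else r))"
      using labels_pivotal[OF s] .
    moreover have "set (leaves l) \<inter> set (leaves r) = {}"
      using Cons.prems T by auto
    ultimately show ?case
      using Cons.IH[OF t _ ks'] Cons.prems T ks by (cases c) auto
  qed
  then show "length ks = length v" and "\<forall>y \<in> set ks. labels (fst y) \<inter> set (leaves t) = {}"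
    by auto
qed

lemma S_out_overlay:
  "x = (i, p, Sx, stx) \<Longrightarrow> S_out (overlay v x \<omega>) = Sx \<union> S_out \<omega>"
  by (cases \<omega>) (auto simp: overlay_def S_out_def)

lemma
  assumes x: "x = (i, p, Sx, stx)" and \<omega>: "\<omega> = (i', p', S', st')"
    and "i \<notin> Sx" and "st' v = Some i" and disjoint: "labels x \<inter> labels \<omega> \<subseteq> {i}"
  shows status_overlay_outside:
      "\<nexists>w. u = v @ w \<Longrightarrow> st' u = Some j \<Longrightarrow> status (overlay v x \<omega>) u = status \<omega> u"
    and status_overlay_inside:
      "stx w = Some j \<Longrightarrow> status (overlay v x \<omega>) (v @ w) = (j \<in> Sx \<or> j = i \<and> status \<omega> v)"
proof -
  have out: "S_out (overlay v x \<omega>) = Sx \<union> S_out \<omega>"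
    using S_out_overlay[OF x] .
  have S_out_labels: "S_out \<omega> \<subseteq> labels \<omega>"
    by (auto simp: \<omega> S_out_def labels_def)
  show "status (overlay v x \<omega>) u = status \<omega> u" if "\<nexists>w. u = v @ w" "st' u = Some j"
  proof -
    have "j \<in> labels \<omega>" using that \<omega> by (auto simp: labels_def)
    then have "j \<notin> Sx" using disjoint \<open>i \<notin> Sx\<close> x by (auto simp: labels_def)
    then show ?thesis
      using that out x \<omega> by (simp add: status_def overlay_def)
  qed
  show "status (overlay v x \<omega>) (v @ w) = (j \<in> Sx \<or> j = i \<and> status \<omega> v)" if "stx w = Some j"
  proof -
    have "j \<in> labels x" using that x by (auto simp: labels_def)
    then have "j \<in> S_out \<omega> \<longleftrightarrow> j = i \<and> i \<in> S_out \<omega>"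
      using disjoint S_out_labels by blast
    then show ?thesis
      using that out x \<omega> \<open>st' v = Some i\<close> by (auto simp: status_def overlay_def)
  qed
qed

lemma relabel_leaf_state: "relabel f (leaf_state i p) = leaf_state (f i) p"
  by (simp add: relabel_def leaf_state_def fun_eq_iff)

lemma status_plug_leaf_state_swap:
  assumes "i \<in> L" and "i0 \<in> L" and "\<forall>y \<in> set ks. labels (fst y) \<inter> L = {}"
    and "snd (snd (snd (plug T v (leaf_state i p) ks))) u \<noteq> None"
  shows "status (plug T v (leaf_state i0 p) ks) u = status (plug T v (leaf_state i p) ks) u"
proof -
  have "\<forall>y \<in> set ks. \<forall>j \<in> labels (fst y). Transposition.transpose i i0 j = j"
    using assms(1-3) by (metis disjoint_iff transpose_apply_other)
  then have "plug T v (leaf_state i0 p) ks = relabel (Transposition.transpose i i0) (plug T v (leaf_state i p) ks)"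
    using plug_relabel[of ks "Transposition.transpose i i0" T v "leaf_state i p"]
    by (simp add: relabel_leaf_state)
  then show ?thesis
    using status_relabel[OF inj_transpose assms(4)] by simp
qed

lemma node_map_plug_below:
  assumes "subtree_at T v \<noteq> None" and "length ks = length v"
  shows "snd (snd (snd (plug T v x ks))) (v @ w) = snd (snd (snd x)) w"
proof -
  obtain y where "plug T v x ks = overlay v x y"
    using plug_overlay[OF assms] by blast
  then show ?thesis
    by (cases x; cases y) (auto simp: overlay_def)
qed

lemma plug_collapse:
  assumes T: "distinct (leaves T)" and t: "subtree_at T v = Some t"
    and x: "x \<in> set_pmf (pivotal q t)" and ks: "ks \<in> set_pmf (siblings_pmf q T v)"
  defines "\<omega>1 \<equiv> plug T v (leaf_state (fst x) (carried q t)) ks"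
  shows "plug T v x ks = overlay v x \<omega>1"
    and "snd (snd (snd \<omega>1)) v = Some (fst x)"
    and "labels x \<inter> labels \<omega>1 \<subseteq> {fst x}"
proof -
  have len: "length ks = length v"
    and siblings: "\<forall>y \<in> set ks. labels (fst y) \<inter> set (leaves t) = {}"
    using set_pmf_siblings_pmf[OF t T ks] by auto
  show "plug T v x ks = overlay v x \<omega>1"
    using plug_overlay[of T v ks x] t len carried_pivotal[OF x] by (simp add: \<omega>1_def)
  show "snd (snd (snd \<omega>1)) v = Some (fst x)"
    using node_map_plug_below[of T v ks _ "[]"] t len by (simp add: \<omega>1_def leaf_state_def)
  have "labels (leaf_state (fst x) (carried q t)) = {fst x}"
    by (auto simp: labels_def leaf_state_def)
  then have "labels \<omega>1 \<subseteq> insert (fst x) (\<Union>y \<in> set ks. labels (fst y))"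
    using labels_plug[of T v "leaf_state (fst x) (carried q t)" ks] by (simp add: \<omega>1_def)
  then show "labels x \<inter> labels \<omega>1 \<subseteq> {fst x}"
    using labels_pivotal[OF x] siblings by blast
qed

definition inside_status :: "pstate \<Rightarrow> bool \<Rightarrow> bool list \<Rightarrow> bool" where
  "inside_status x b w = (case x of (i, p, S, st) \<Rightarrow> the (st w) \<in> S \<or> the (st w) = i \<and> b)"

lemma status_plug:
  assumes T: "distinct (leaves T)" and t: "subtree_at T v = Some t"
    and x: "x \<in> set_pmf (pivotal q t)" and ks: "ks \<in> set_pmf (siblings_pmf q T v)"
    and i0: "i0 \<in> set (leaves t)"
  defines "\<omega>0 \<equiv> plug T v (leaf_state i0 (carried q t)) ks"
  shows "status (plug T v x ks) v = status \<omega>0 v"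
    and "u \<in> outside_nodes T v \<Longrightarrow> status (plug T v x ks) u = status \<omega>0 u"
    and "u \<in> inside_nodes T v \<Longrightarrow>
         status (plug T v x ks) u = inside_status x (status \<omega>0 v) (drop (length v) u)"
proof -
  obtain i p Sx stx where x_eq: "x = (i, p, Sx, stx)" by (cases x) auto
  define \<omega>1 where "\<omega>1 = plug T v (leaf_state i (carried q t)) ks"
  obtain i1 p1 S1 st1 where \<omega>1_eq: "\<omega>1 = (i1, p1, S1, st1)" by (cases \<omega>1) auto
  have plug_x: "plug T v x ks = overlay v x \<omega>1" and st1_v: "st1 v = Some i"
    and disjoint: "labels x \<inter> labels \<omega>1 \<subseteq> {i}"
    using plug_collapse[OF T t x ks] by (simp_all add: x_eq \<omega>1_eq flip: \<omega>1_def)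
  have "i \<notin> Sx" and "stx [] = Some i"
    using well_formed_pivotal[OF distinct_leaves_subtree_at[OF t T] x] by (simp_all add: x_eq well_formed_def)
  have "i \<in> set (leaves t)"
    using labels_pivotal[OF x] by (simp add: x_eq labels_def)
  \<comment> \<open>Swapping i and i0 shows that v and the outside do not see which index x promotes to v.\<close>
  have status_\<omega>0: "status \<omega>0 u = status \<omega>1 u" if "st1 u \<noteq> None" for u
    using status_plug_leaf_state_swap[OF \<open>i \<in> set (leaves t)\<close> i0] set_pmf_siblings_pmf(2)[OF t T ks] that
    by (simp add: \<omega>0_def \<omega>1_def[symmetric] \<omega>1_eq)
  have "plug T v x ks \<in> set_pmf (pivotal q T)"
    using x ks by (auto simp: pivotal_plug[OF t])
  then have defined: "snd (snd (snd (overlay v x \<omega>1))) u \<noteq> None" if "u \<in> nodes T" for u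
    using well_formed_pivotal[OF T] that by (cases "overlay v x \<omega>1") (auto simp: plug_x well_formed_def)
  note inside = status_overlay_inside[OF x_eq \<omega>1_eq \<open>i \<notin> Sx\<close> st1_v disjoint]
  show "status (plug T v x ks) v = status \<omega>0 v"
    using inside[OF \<open>stx [] = Some i\<close>] \<open>i \<notin> Sx\<close> st1_v status_\<omega>0[of v] by (simp add: plug_x)
  show "status (plug T v x ks) u = status \<omega>0 u" if "u \<in> outside_nodes T v"
  proof -
    from that have u: "u \<in> nodes T" "\<nexists>w. u = v @ w" by (auto simp: outside_nodes_def)
    then obtain j where "st1 u = Some j"
      using defined[OF u(1)] by (auto simp: overlay_def x_eq \<omega>1_eq)
    with u status_overlay_outside[OF x_eq \<omega>1_eq \<open>i \<notin> Sx\<close> st1_v disjoint] status_\<omega>0[of u]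
    show ?thesis by (simp add: plug_x)
  qed
  show "status (plug T v x ks) u = inside_status x (status \<omega>0 v) (drop (length v) u)"
    if "u \<in> inside_nodes T v"
  proof -
    from that obtain w where u: "u = v @ w" "u \<in> nodes T" by (auto simp: inside_nodes_def)
    then obtain j where "stx w = Some j"
      using defined[OF u(2)] by (auto simp: overlay_def x_eq \<omega>1_eq)
    with u inside[of w j] status_\<omega>0[of v] st1_v show ?thesis
      unfolding plug_x by (simp add: inside_status_def x_eq)
  qed
qed

lemma prob_bind_map_pmf_product:
  assumes "\<And>x k. x \<in> set_pmf A \<Longrightarrow> k \<in> set_pmf B \<Longrightarrow> g x k \<in> E \<longleftrightarrow> x \<in> X \<and> k \<in> Y"
  shows "measure_pmf.prob (bind_pmf A (\<lambda>x. map_pmf (g x) B)) E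
           = measure_pmf.prob A X * measure_pmf.prob B Y"
proof -
  have "bind_pmf A (\<lambda>x. map_pmf (g x) B) = map_pmf (\<lambda>(x, k). g x k) (pair_pmf A B)"
    by (simp add: pair_pmf_def map_pmf_def bind_assoc_pmf bind_return_pmf)
  moreover have "measure_pmf.prob (pair_pmf A B) ((\<lambda>(x, k). g x k) -` E)
      = measure_pmf.prob (pair_pmf A B) ((X \<inter> set_pmf A) \<times> (Y \<inter> set_pmf B))"
    using assms by (intro measure_prob_cong_0) (auto simp flip: set_pmf_iff)
  moreover have "\<dots> = measure_pmf.prob A (X \<inter> set_pmf A) * measure_pmf.prob B (Y \<inter> set_pmf B)"
    by (rule measure_pmf_prob_product) (auto intro: countable_Int2)
  ultimately show ?thesis
    by (simp add: measure_Int_set_pmf)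
qed

lemma conditional_independence_bind_map_pmf:
  assumes M: "M = bind_pmf A (\<lambda>x. map_pmf (g x) B)"
    and events: "\<And>x k. x \<in> set_pmf A \<Longrightarrow> k \<in> set_pmf B \<Longrightarrow>
      (g x k \<in> V \<longleftrightarrow> k \<in> V') \<and> (g x k \<in> J \<longleftrightarrow> k \<in> J') \<and> (k \<in> V' \<longrightarrow> (g x k \<in> I \<longleftrightarrow> x \<in> I'))"
  shows "measure_pmf.prob M (I \<inter> J \<inter> V) / measure_pmf.prob M V
       = (measure_pmf.prob M (I \<inter> V) / measure_pmf.prob M V)
       * (measure_pmf.prob M (J \<inter> V) / measure_pmf.prob M V)"
proof -
  have "measure_pmf.prob M (I \<inter> J \<inter> V) = measure_pmf.prob A I' * measure_pmf.prob B (J' \<inter> V')"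
    unfolding M by (rule prob_bind_map_pmf_product) (use events in blast)
  moreover have "measure_pmf.prob M V = measure_pmf.prob A UNIV * measure_pmf.prob B V'"
    unfolding M by (rule prob_bind_map_pmf_product) (use events in blast)
  moreover have "measure_pmf.prob M (I \<inter> V) = measure_pmf.prob A I' * measure_pmf.prob B V'"
    unfolding M by (rule prob_bind_map_pmf_product) (use events in blast)
  moreover have "measure_pmf.prob M (J \<inter> V) = measure_pmf.prob A UNIV * measure_pmf.prob B (J' \<inter> V')"
    unfolding M by (rule prob_bind_map_pmf_product) (use events in blast)
  ultimately show ?thesis
    by simp
qed

theorem propositionE4:
  fixes T :: tree and q :: "nat \<Rightarrow> real" and v :: "bool list" and b :: bool
    and xI xO :: "bool list \<Rightarrow> bool"
  assumes "standing_assumptions q T"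
    and "v \<in> internal_nodes T" and "v \<noteq> []"
    and "measure_pmf.prob (pivotal q T) {\<omega>. status \<omega> v = b} > 0"
  shows
    "measure_pmf.prob (pivotal q T)
        ({\<omega>. \<forall>u \<in> inside_nodes T v. status \<omega> u = xI u}
         \<inter> {\<omega>. \<forall>u \<in> outside_nodes T v. status \<omega> u = xO u}
         \<inter> {\<omega>. status \<omega> v = b})
       / measure_pmf.prob (pivotal q T) {\<omega>. status \<omega> v = b}
     = (measure_pmf.prob (pivotal q T)
          ({\<omega>. \<forall>u \<in> inside_nodes T v. status \<omega> u = xI u} \<inter> {\<omega>. status \<omega> v = b})
        / measure_pmf.prob (pivotal q T) {\<omega>. status \<omega> v = b})
     * (measure_pmf.prob (pivotal q T)
          ({\<omega>. \<forall>u \<in> outside_nodes T v. status \<omega> u = xO u} \<inter> {\<omega>. status \<omega> v = b})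
        / measure_pmf.prob (pivotal q T) {\<omega>. status \<omega> v = b})"
proof -
  have distinct: "distinct (leaves T)"
    using assms(1) by (simp add: standing_assumptions_def)
  obtain t where t: "subtree_at T v = Some t"
    using assms(2) by (auto simp: internal_nodes_def)
  have i0: "hd (leaves t) \<in> set (leaves t)"
    using leaves_ne_Nil by simp
  define \<omega>0 where "\<omega>0 ks = plug T v (leaf_state (hd (leaves t)) (carried q t)) ks" for ks
  show ?thesis
  proof (rule conditional_independence_bind_map_pmf[OF pivotal_plug[OF t],
        where V' = "{ks. status (\<omega>0 ks) v = b}"
          and J' = "{ks. \<forall>u \<in> outside_nodes T v. status (\<omega>0 ks) u = xO u}"
          and I' = "{x. \<forall>u \<in> inside_nodes T v. inside_status x b (drop (length v) u) = xI u}"],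
        goal_cases)
    case (1 x ks)
    from status_plug[OF distinct t 1 i0] show ?case
      by (simp add: \<omega>0_def)
  qed
qed

end
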